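(* There exist an environment $E$ and a total preorder $\succeq$ on $\Pi^E$ such that $\succeq\in\mathrm{Ord}_{\mathrm{RRL}}(E)$ but $\succeq\notin\mathrm{Ord}_{\mathrm{FTR}}(E)$. (Such an ordering can be obtained from an RRL specification with $\alpha>0$ and $F$ the Shannon entropy $F(p)=-\sum_a p(a)\log p(a)$.)
   Context: An environment is a tuple $E=(\mathcal S,\mathcal A,\mathcal T,\mathcal I)$ where $\mathcal S,\mathcal A$ are finite nonempty sets, $\mathcal T:\mathcal S\times\mathcal A\to\Delta(\mathcal S)$ and $\mathcal I\in\Delta(\mathcal S)$. A policy is a map $\pi:\mathcal S\to\Delta(\mathcal A)$ (stationary, possibly stochastic); $\Pi^E$ denotes the set of all policies. A trajectory $\xi=(s_0,a_0,s_1,a_1,\dots)\in\Xi:=\mathcal S\times(\mathcal A\times\mathcal S)^\omega$ is generated under $\pi$ by $s_0\sim\mathcal I$, $a_t\sim\pi(s_t)$, $s_{t+1}\sim\mathcal T(s_t,a_t)$; $\mathbb E^\pi_\xi$ denotes expectation under this distribution. An objective-specification formalism $X$ assigns to each environment $E$ a set of objective specifications, each inducing a total preorder $\succeq$ on $\Pi^E$; $\mathrm{Ord}_X(E)$ is the set of total preorders so induced. A specification defining a scalar $J:\Pi^E\to\mathbb R$ induces $\pi_1\succeq\pi_2\iff J(\pi_1)\ge J(\pi_2)$. RRL: specification $(\mathcal R,\alpha,F,\gamma)$ with $\mathcal R:\mathcal S\times\mathcal A\times\mathcal S\to\mathbb R$, $\alpha\in\mathbb R$, $F:\Delta(\mathcal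 A)\to\mathbb R$, $\gamma\in[0,1)$; $J(\pi)=\mathbb E^\pi_\xi[\sum_{t=0}^\infty\gamma^t(\mathcal R(s_t,a_t,s_{t+1})-\alpha F(\pi(s_t)))]$. FTR: specification $(f)$ with $f:\Xi\to\mathbb R$ Borel measurable (product topology on $\Xi$) such that $\mathbb E^\pi_\xi[f(\xi)]$ is well-defined and finite for every policy; $J(\pi)=\mathbb E^\pi_\xi[f(\xi)]$. *)

theory Defs
  imports "HOL-Probability.Probability"
begin

record env =
  St :: "nat set"
  Ac :: "nat set"
  Tr :: "nat \<Rightarrow> nat \<Rightarrow> nat pmf"
  Init :: "nat pmf"

definition wf_env :: "env \<Rightarrow> bool" where
  "wf_env E \<longleftrightarrow> finite (St E) \<and> St E \<noteq> {} \<and> finite (Ac E) \<and> Ac E \<noteq> {}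
     \<and> (\<forall>s\<in>St E. \<forall>a\<in>Ac E. set_pmf (Tr E s a) \<subseteq> St E)
     \<and> set_pmf (Init E) \<subseteq> St E"

definition policies :: "env \<Rightarrow> (nat \<Rightarrow> nat pmf) set" where
  "policies E = {\<pi>. \<forall>s\<in>St E. set_pmf (\<pi> s) \<subseteq> Ac E}"

text \<open>Trajectories: streams of state-action pairs (s_t, a_t); this is the sequence
  s0, a0, s1, a1, ... regrouped. Measurable structure: product (cylinder) sigma algebra
  of discrete spaces, i.e. the Borel sigma algebra of the product topology.\<close>
abbreviation traj_space :: "(nat \<times> nat) stream measure" where
  "traj_space \<equiv> stream_space (count_space UNIV)"

fun prefix_cont :: "env \<Rightarrow> (nat \<Rightarrow> nat pmf) \<Rightarrow> nat \<Rightarrow> nat \<Rightarrow> (nat \<times> nat) list \<Rightarrow> real" where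
  "prefix_cont E \<pi> s a [] = 1"
| "prefix_cont E \<pi> s a ((s', a') # xs) =
     pmf (Tr E s a) s' * pmf (\<pi> s') a' * prefix_cont E \<pi> s' a' xs"

fun prefix_prob :: "env \<Rightarrow> (nat \<Rightarrow> nat pmf) \<Rightarrow> (nat \<times> nat) list \<Rightarrow> real" where
  "prefix_prob E \<pi> [] = 1"
| "prefix_prob E \<pi> ((s, a) # xs) = pmf (Init E) s * pmf (\<pi> s) a * prefix_cont E \<pi> s a xs"

text \<open>M is the trajectory distribution generated by s0 ~ I, a_t ~ pi(s_t), s_{t+1} ~ T(s_t,a_t):
  a probability measure on trajectories with the corresponding finite-dimensional marginals.\<close>
definition is_traj_measure :: "env \<Rightarrow> (nat \<Rightarrow> nat pmf) \<Rightarrow> (nat \<times> nat) stream measure \<Rightarrow> bool" where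
  "is_traj_measure E \<pi> M \<longleftrightarrow> sets M = sets traj_space \<and> prob_space M
     \<and> (\<forall>xs. emeasure M {\<omega> \<in> space M. stake (length xs) \<omega> = xs} = ennreal (prefix_prob E \<pi> xs))"

definition traj :: "env \<Rightarrow> (nat \<Rightarrow> nat pmf) \<Rightarrow> (nat \<times> nat) stream measure" where
  "traj E \<pi> = (THE M. is_traj_measure E \<pi> M)"

definition induced_ord :: "env \<Rightarrow> ((nat \<Rightarrow> nat pmf) \<Rightarrow> real) \<Rightarrow> (nat \<Rightarrow> nat pmf) rel" where
  "induced_ord E J = {(\<pi>1, \<pi>2). \<pi>1 \<in> policies E \<and> \<pi>2 \<in> policies E \<and> J \<pi>1 \<ge> J \<pi>2}"

text \<open>RRL objective. The reward/regulariser terms are only evaluated along trajectories in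
  S x A (which holds almost surely); the guard only fixes the integrand on a null set.\<close>
definition J_RRL :: "env \<Rightarrow> (nat \<Rightarrow> nat \<Rightarrow> nat \<Rightarrow> real) \<Rightarrow> real \<Rightarrow> (nat pmf \<Rightarrow> real) \<Rightarrow> real
                      \<Rightarrow> (nat \<Rightarrow> nat pmf) \<Rightarrow> real" where
  "J_RRL E R \<alpha> F \<gamma> \<pi> =
     (\<integral>\<omega>. (\<Sum>t. \<gamma> ^ t *
        (if fst (\<omega> !! t) \<in> St E \<and> snd (\<omega> !! t) \<in> Ac E \<and> fst (\<omega> !! Suc t) \<in> St E
         then R (fst (\<omega> !! t)) (snd (\<omega> !! t)) (fst (\<omega> !! Suc t)) - \<alpha> * F (\<pi> (fst (\<omega> !! t)))
         else 0)) \<partial>traj E \<pi>)"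

definition Ord_RRL :: "env \<Rightarrow> (nat \<Rightarrow> nat pmf) rel set" where
  "Ord_RRL E = {induced_ord E (J_RRL E R \<alpha> F \<gamma>) | R \<alpha> F \<gamma>. 0 \<le> \<gamma> \<and> \<gamma> < 1}"

definition Ord_FTR :: "env \<Rightarrow> (nat \<Rightarrow> nat pmf) rel set" where
  "Ord_FTR E = {induced_ord E (\<lambda>\<pi>. \<integral>\<omega>. f \<omega> \<partial>traj E \<pi>) | f.
                  f \<in> borel_measurable traj_space \<and> (\<forall>\<pi>\<in>policies E. integrable (traj E \<pi>) f)}"

text \<open>Shannon entropy of a distribution over A (natural logarithm; 0 log 0 = 0).\<close>
definition shannon_entropy :: "nat set \<Rightarrow> nat pmf \<Rightarrow> real" where
  "shannon_entropy A p = - (\<Sum>a\<in>A. pmf p a * ln (pmf p a))"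

end

theory Submission
  imports Defs
begin

text \<open>Consider the environment in which the agent acts once in the initial state 0 and then
  stays forever in the absorbing state 1. Among policies that play action 0 in state 1, every
  trajectory is determined by the first action, so the value of an FTR objective is an
  expectation over two trajectories and hence affine in the action distribution at state 0:
  if the two deterministic choices are equally good, so is their uniform mixture.
  Entropy-regularised RL with zero reward, weight 1 and discount 0 gives both deterministic
  policies value 0 but the uniform mixture value -ln 2, since the Shannon entropy is strictly
  concave.\<close>

lemma preorder_on_induced_ord: "preorder_on (policies E) (induced_ord E J)"
  unfolding preorder_on_def refl_on_def trans_def induced_ord_def by auto

lemma total_on_induced_ord: "total_on (policies E) (induced_ord E J)"
  unfolding total_on_def induced_ord_def by auto

lemma induced_ord_eqD:
  assumes "induced_ord E J = induced_ord E J'" "\<pi> \<in> policies E" "\<pi>' \<in> policies E"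
  shows "J \<pi> \<ge> J \<pi>' \<longleftrightarrow> J' \<pi> \<ge> J' \<pi>'"
  using assms unfolding induced_ord_def by (auto simp: set_eq_iff)

lemma sstart_UNIV_eq_stake: "sstart UNIV xs = {\<omega>. stake (length xs) \<omega> = xs}"
  by (auto simp: sstart_eq; metis length_stake nth_equalityI stake_nth)

lemma is_traj_measure_unique:
  assumes "is_traj_measure E \<pi> M" "is_traj_measure E \<pi> N"
  shows "M = N"
proof (rule stream_space_eq_sstart[where S = UNIV])
  show "prob_space M" "prob_space N" "sets M = sets traj_space" "sets N = sets traj_space"
    using assms by (auto simp: is_traj_measure_def)
  then have "space M = UNIV" "space N = UNIV"
    by (auto dest!: sets_eq_imp_space_eq simp: space_stream_space)
  then show "emeasure M (sstart UNIV xs) = emeasure N (sstart UNIV xs)" for xs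
    using assms by (simp add: sstart_UNIV_eq_stake is_traj_measure_def)
qed auto

lemma traj_eqI: "is_traj_measure E \<pi> M \<Longrightarrow> traj E \<pi> = M"
  unfolding traj_def using is_traj_measure_unique by blast

lemma shannon_entropy_return_pmf: "shannon_entropy A (return_pmf a) = 0"
  by (auto simp: shannon_entropy_def indicator_def intro!: sum.neutral)

lemma shannon_entropy_pmf_of_set:
  assumes "finite A" "B \<subseteq> A" "B \<noteq> {}"
  shows "shannon_entropy A (pmf_of_set B) = ln (card B)"
proof -
  have "finite B"
    using assms finite_subset by blast
  have "shannon_entropy A (pmf_of_set B) = - (\<Sum>a\<in>B. 1 / card B * ln (1 / card B))"
    unfolding shannon_entropy_def using assms \<open>finite B\<close>
    by (subst sum.mono_neutral_right[of A B]) auto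
  also have "\<dots> = ln (card B)"
    using \<open>finite B\<close> assms(3) by (simp add: ln_div)
  finally show ?thesis .
qed

definition one_shot_env :: env where
  "one_shot_env = \<lparr>St = {0, 1}, Ac = {0, 1}, Tr = (\<lambda>s a. return_pmf 1), Init = return_pmf 0\<rparr>"

definition one_shot_traj :: "nat \<Rightarrow> (nat \<times> nat) stream" where
  "one_shot_traj a = (0, a) ## sconst (1, 0)"

definition one_shot_policy :: "nat pmf \<Rightarrow> nat \<Rightarrow> nat pmf" where
  "one_shot_policy p = (\<lambda>s. return_pmf 0)(0 := p)"

lemma wf_one_shot_env: "wf_env one_shot_env"
  by (auto simp: wf_env_def one_shot_env_def)

lemma one_shot_policy_in_policies:
  "set_pmf p \<subseteq> {0, 1} \<Longrightarrow> one_shot_policy p \<in> policies one_shot_env"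
  by (auto simp: policies_def one_shot_policy_def one_shot_env_def)

lemma prefix_cont_one_shot_env:
  assumes "\<pi> 1 = return_pmf 0"
  shows "prefix_cont one_shot_env \<pi> s a xs = (if xs = replicate (length xs) (1, 0) then 1 else 0)"
proof (induction xs arbitrary: s a)
  case (Cons x xs)
  then show ?case
    using assms by (cases x) (auto simp: one_shot_env_def indicator_def)
qed simp

lemma prefix_prob_one_shot_policy:
  "ennreal (prefix_prob one_shot_env (one_shot_policy p) xs)
     = emeasure p {a. stake (length xs) (one_shot_traj a) = xs}"
proof (cases xs)
  case (Cons x ys)
  obtain s a where x: "x = (s, a)"
    by force
  let ?prefix_ok = "s = 0 \<and> ys = replicate (length ys) (1, 0)"
  have "{a'. stake (length xs) (one_shot_traj a') = xs} = (if ?prefix_ok then {a} else {})"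
    by (auto simp: Cons x one_shot_traj_def map_replicate_const)
  moreover have "prefix_prob one_shot_env (one_shot_policy p) xs
                   = (if ?prefix_ok then pmf p a else 0)"
    using prefix_cont_one_shot_env[of "one_shot_policy p"]
    by (simp add: Cons x one_shot_env_def one_shot_policy_def indicator_def)
  ultimately show ?thesis
    by (simp add: emeasure_pmf_single)
qed (simp add: measure_pmf.emeasure_space_1[simplified])

lemma traj_one_shot_env:
  "traj one_shot_env (one_shot_policy p) = distr (measure_pmf p) traj_space one_shot_traj"
proof (rule traj_eqI)
  let ?M = "distr (measure_pmf p) traj_space one_shot_traj"
  have one_shot_traj_measurable: "one_shot_traj \<in> measurable (measure_pmf p) traj_space"
    by (simp add: space_stream_space)
  then have "emeasure ?M {\<omega> \<in> space ?M. stake (length xs) \<omega> = xs}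
               = ennreal (prefix_prob one_shot_env (one_shot_policy p) xs)" for xs
    using sets_sstart[of UNIV xs]
    by (simp add: prefix_prob_one_shot_policy sstart_UNIV_eq_stake emeasure_distr
          space_stream_space vimage_def del: sets_sstart)
  moreover have "prob_space ?M"
    using one_shot_traj_measurable by (rule measure_pmf.prob_space_distr)
  ultimately show "is_traj_measure one_shot_env (one_shot_policy p) ?M"
    by (simp add: is_traj_measure_def)
qed

lemma integral_traj_one_shot_env:
  fixes f :: "(nat \<times> nat) stream \<Rightarrow> real"
  assumes "f \<in> borel_measurable traj_space" "set_pmf p \<subseteq> {0, 1}"
  shows "(\<integral>\<omega>. f \<omega> \<partial>traj one_shot_env (one_shot_policy p))
           = f (one_shot_traj 0) * pmf p 0 + f (one_shot_traj 1) * pmf p 1"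
proof -
  have "(\<integral>\<omega>. f \<omega> \<partial>traj one_shot_env (one_shot_policy p)) = (\<integral>a. f (one_shot_traj a) \<partial>p)"
    unfolding traj_one_shot_env
    by (rule integral_distr) (auto simp: assms(1) space_stream_space)
  also have "\<dots> = (\<Sum>a\<in>{0, 1}. f (one_shot_traj a) * pmf p a)"
    using assms(2) by (intro integral_measure_pmf_real) auto
  finally show ?thesis
    by simp
qed

lemma J_RRL_one_shot_entropy:
  assumes "set_pmf p \<subseteq> {0, 1}"
  shows "J_RRL one_shot_env (\<lambda>_ _ _. 0) 1 (shannon_entropy {0, 1}) 0 (one_shot_policy p)
           = - shannon_entropy {0, 1} p"
proof -
  have undiscounted: "(\<Sum>t. (0::real) ^ t * g t) = g 0" for g
    using powser_zero[of g] by (simp add: mult.commute)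
  have "J_RRL one_shot_env (\<lambda>_ _ _. 0) 1 (shannon_entropy {0, 1}) 0 (one_shot_policy p)
          = - shannon_entropy {0, 1} p * (pmf p 0 + pmf p 1)"
    unfolding J_RRL_def using assms
    by (subst integral_traj_one_shot_env)
       (auto simp: undiscounted one_shot_traj_def one_shot_env_def one_shot_policy_def
          algebra_simps)
  also have "pmf p 0 + pmf p 1 = 1"
    using sum_pmf_eq_1[of "{0, 1}" p] assms by simp
  finally show ?thesis
    by simp
qed

lemma entropy_regularised_ord_not_FTR:
  "induced_ord one_shot_env (J_RRL one_shot_env (\<lambda>_ _ _. 0) 1 (shannon_entropy {0, 1}) 0)
     \<notin> Ord_FTR one_shot_env"
proof
  let ?J = "J_RRL one_shot_env (\<lambda>_ _ _. 0) 1 (shannon_entropy {0, 1}) 0"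
  define det where "det a = one_shot_policy (return_pmf a)" for a :: nat
  define mix where "mix = one_shot_policy (pmf_of_set {0, 1})"
  have policies: "det 0 \<in> policies one_shot_env" "det 1 \<in> policies one_shot_env"
    "mix \<in> policies one_shot_env"
    by (auto simp: det_def mix_def intro!: one_shot_policy_in_policies)
  have J_values: "?J (det 0) = 0" "?J (det 1) = 0" "?J mix < 0"
    using J_RRL_one_shot_entropy[of "return_pmf 0"] J_RRL_one_shot_entropy[of "return_pmf 1"]
      J_RRL_one_shot_entropy[of "pmf_of_set {0, 1}"]
    by (simp_all add: det_def mix_def shannon_entropy_return_pmf shannon_entropy_pmf_of_set)
  assume "induced_ord one_shot_env ?J \<in> Ord_FTR one_shot_env"
  then obtain f :: "(nat \<times> nat) stream \<Rightarrow> real" where f: "f \<in> borel_measurable traj_space"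
    and ord_eq: "induced_ord one_shot_env ?J
                   = induced_ord one_shot_env (\<lambda>\<pi>. \<integral>\<omega>. f \<omega> \<partial>traj one_shot_env \<pi>)"
    unfolding Ord_FTR_def by blast
  have integrals: "(\<integral>\<omega>. f \<omega> \<partial>traj one_shot_env (det 0)) = f (one_shot_traj 0)"
    "(\<integral>\<omega>. f \<omega> \<partial>traj one_shot_env (det 1)) = f (one_shot_traj 1)"
    "(\<integral>\<omega>. f \<omega> \<partial>traj one_shot_env mix) = (f (one_shot_traj 0) + f (one_shot_traj 1)) / 2"
    using f by (simp_all add: det_def mix_def integral_traj_one_shot_env)
  have "f (one_shot_traj 0) \<ge> f (one_shot_traj 1)"
    using induced_ord_eqD[OF ord_eq policies(1,2)] J_values integrals by simp
  moreover have "f (one_shot_traj 1) \<ge> f (one_shot_traj 0)"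
    using induced_ord_eqD[OF ord_eq policies(2,1)] J_values integrals by simp
  moreover have "\<not> (f (one_shot_traj 0) + f (one_shot_traj 1)) / 2 \<ge> f (one_shot_traj 0)"
    using induced_ord_eqD[OF ord_eq policies(3,1)] J_values integrals by simp
  ultimately show False
    by argo
qed

theorem mainTheorem15:
  shows "\<exists>E Ord. wf_env E
     \<and> preorder_on (policies E) Ord \<and> total_on (policies E) Ord
     \<and> Ord \<in> Ord_RRL E \<and> Ord \<notin> Ord_FTR E
     \<and> (\<exists>R \<alpha> \<gamma>. \<alpha> > 0 \<and> 0 \<le> \<gamma> \<and> \<gamma> < 1
          \<and> Ord = induced_ord E (J_RRL E R \<alpha> (shannon_entropy (Ac E)) \<gamma>))"
proof -
  let ?Ord = "induced_ord one_shot_env (J_RRL one_shot_env (\<lambda>_ _ _. 0) 1 (shannon_entropy {0, 1}) 0)"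
  have "Ac one_shot_env = {0, 1}"
    by (simp add: one_shot_env_def)
  then have entropy_regularised: "\<exists>R \<alpha> \<gamma>. \<alpha> > 0 \<and> 0 \<le> \<gamma> \<and> \<gamma> < 1
      \<and> ?Ord = induced_ord one_shot_env (J_RRL one_shot_env R \<alpha> (shannon_entropy (Ac one_shot_env)) \<gamma>)"
    by (intro exI[of _ "\<lambda>_ _ _. 0"] exI[of _ "1::real"] exI[of _ "0::real"]) simp
  have "?Ord \<in> Ord_RRL one_shot_env"
    unfolding Ord_RRL_def by (intro CollectI exI[of _ "\<lambda>_ _ _. 0"] exI[of _ "1::real"]
        exI[of _ "shannon_entropy {0, 1}"] exI[of _ "0::real"]) simp
  then show ?thesis
    using wf_one_shot_env preorder_on_induced_ord total_on_induced_ord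
      entropy_regularised_ord_not_FTR entropy_regularised
    by blast
qed

end
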